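(* Let $\Lambda$ be a net of quadrics in $\mathbb{P}^5$ which is stable with respect to every one-parameter subgroup of each of the numerical types $\rho_1=(1,1,1,1,1,-5)$, $\rho_2=(1,1,1,1,-2,-2)$, $\rho_3=(1,1,1,-1,-1,-1)$, $\rho_4=(2,2,-1,-1,-1,-1)$, $\rho_5=(5,-1,-1,-1,-1,-1)$. Let $\{x_0,\dots,x_5\}$ be any basis of $V$ and let $(Q_1,Q_2,Q_3)$ be a normalized basis of $\Lambda$ with respect to it. Then: (1) $Q_1,Q_2,Q_3\notin(x_5)$; (2) $(Q_2,Q_3)\not\subseteq(x_4,x_5)$ and $Q_3\notin(x_4,x_5)^2$; (3) $(Q_1,Q_2,Q_3)\not\subseteq(x_3,x_4,x_5)$, and either $(Q_2,Q_3)\not\subseteq(x_3,x_4,x_5)$ or $Q_3\notin(x_3,x_4,x_5)^2$; (4) $(Q_2,Q_3)\not\subseteq(x_2,x_3,x_4,x_5)^2$, and either $(Q_1,Q_2,Q_3)\not\subseteq(x_2,x_3,x_4,x_5)$ or $Q_3\notin(x_2,x_3,x_4,x_5)^2$; (5) $(Q_1,Q_2,Q_3)\not\subseteq(x_1,x_2,x_3,x_4,x_5)$ or $(Q_2,Q_3)\not\subseteq(x_1,x_2,x_3,x_4,x_5)^2$.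
   Context: $V=H^0(\mathbb{P}^5,\mathcal{O}(1))$, $W=H^0(\mathbb{P}^5,\mathcal{O}(2))$; a net of quadrics is a $3$-dimensional subspace $\Lambda\subset W$, a point of $Gr(3,W)\subset\mathbb{P}(\bigwedge^3W)$ with $SL(6)$-action. A 1-PS of numerical type $(a_0,\dots,a_5)$ ($a_0\ge\dots\ge a_5$, $\sum a_k=0$) acts diagonally on some basis $x_0,\dots,x_5$ of $V$ with these weights; weight of $x_ix_j$ is $a_i+a_j$, weight of a Plücker coordinate $x_{i_1}x_{j_1}\wedge x_{i_2}x_{j_2}\wedge x_{i_3}x_{j_3}$ is the sum of the three monomial weights. $\Lambda$ is stable with respect to $\rho$ if some Plücker coordinate not vanishing on $\Lambda$ has positive $\rho$-weight. Given the basis $x_0,\dots,x_5$, order quadratic monomials lexicographically ($x_0^2\succ x_0x_1\succ\cdots$), and let $in_{lex}(Q)$ be the lexicographically largest monomial of $Q$; a normalized basis of $\Lambda$ is a basis $(Q_1,Q_2,Q_3)$ with $in_{lex}(Q_1)\succ_{lex}in_{lex}(Q_2)\succ_{lex}in_{lex}(Q_3)$. For an ideal $I$, $(Q_2,Q_3)\subseteq I$ means $Q_2,Q_3\in I$. *)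

theory Defs
  imports Complex_Main
begin

text \<open>Fix reference coordinates v_0..v_5 on C^6 (so P^5 = P(C^6)).
A quadric is stored as a symmetric 6x6 complex matrix A (entries indexed by
i,j < 6, zero outside), the quadric being v |-> sum_{i,j<6} A i j v_i v_j.  A basis x_0..x_5 of V is encoded by an
invertible matrix M with v = M x, i.e. the x_k are the rows of M^{-1};
a quadric A then reads sum_{k,l} (M^T A M) k l x_k x_l in the basis x.\<close>

type_synonym mat6 = "nat \<Rightarrow> nat \<Rightarrow> complex"

definition quadrics :: "mat6 set" where
  "quadrics = {A. (\<forall>i j. A i j = A j i) \<and> (\<forall>i j. 6 \<le> i \<or> 6 \<le> j \<longrightarrow> A i j = 0)}"

definition invertible6 :: "mat6 \<Rightarrow> bool" where
  "invertible6 M \<longleftrightarrow> (\<exists>L. \<forall>i<6. \<forall>j<6.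
      (\<Sum>k<6. L i k * M k j) = (if i = j then 1 else 0) \<and>
      (\<Sum>k<6. M i k * L k j) = (if i = j then 1 else 0))"

definition cob :: "mat6 \<Rightarrow> mat6 \<Rightarrow> mat6" where
  "cob M A i j = (\<Sum>k<6. \<Sum>l<6. M k i * A k l * M l j)"

definition coef :: "mat6 \<Rightarrow> nat \<times> nat \<Rightarrow> complex" where
  "coef B m = (if fst m = snd m then B (fst m) (fst m) else B (fst m) (snd m) + B (snd m) (fst m))"

definition is_mono :: "nat \<times> nat \<Rightarrow> bool" where
  "is_mono m \<longleftrightarrow> fst m \<le> snd m \<and> snd m < 6"

text \<open>Lexicographic order on quadratic monomials: x_i x_j \<succ> x_k x_l.\<close>
definition mono_succ :: "nat \<times> nat \<Rightarrow> nat \<times> nat \<Rightarrow> bool" where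
  "mono_succ m n \<longleftrightarrow> fst m < fst n \<or> (fst m = fst n \<and> snd m < snd n)"

definition is_in_lex :: "mat6 \<Rightarrow> nat \<times> nat \<Rightarrow> bool" where
  "is_in_lex B m \<longleftrightarrow> is_mono m \<and> coef B m \<noteq> 0 \<and>
     (\<forall>n. is_mono n \<and> mono_succ n m \<longrightarrow> coef B n = 0)"

definition lincomb3 :: "complex \<Rightarrow> complex \<Rightarrow> complex \<Rightarrow> mat6 \<Rightarrow> mat6 \<Rightarrow> mat6 \<Rightarrow> mat6" where
  "lincomb3 a b c P1 P2 P3 = (\<lambda>i j. a * P1 i j + b * P2 i j + c * P3 i j)"

definition lin_indep3 :: "mat6 \<Rightarrow> mat6 \<Rightarrow> mat6 \<Rightarrow> bool" where
  "lin_indep3 P1 P2 P3 \<longleftrightarrow>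
     (\<forall>a b c. lincomb3 a b c P1 P2 P3 = (\<lambda>i j. 0) \<longrightarrow> a = 0 \<and> b = 0 \<and> c = 0)"

definition span3 :: "mat6 \<Rightarrow> mat6 \<Rightarrow> mat6 \<Rightarrow> mat6 set" where
  "span3 P1 P2 P3 = {lincomb3 a b c P1 P2 P3 | a b c. True}"

definition is_net :: "mat6 set \<Rightarrow> bool" where
  "is_net \<Lambda> \<longleftrightarrow> (\<exists>P1 P2 P3. P1 \<in> quadrics \<and> P2 \<in> quadrics \<and> P3 \<in> quadrics \<and>
      lin_indep3 P1 P2 P3 \<and> \<Lambda> = span3 P1 P2 P3)"

definition is_basis3 :: "mat6 set \<Rightarrow> mat6 \<Rightarrow> mat6 \<Rightarrow> mat6 \<Rightarrow> bool" where
  "is_basis3 \<Lambda> Q1 Q2 Q3 \<longleftrightarrow> Q1 \<in> \<Lambda> \<and> Q2 \<in> \<Lambda> \<and> Q3 \<in> \<Lambda> \<and>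
      lin_indep3 Q1 Q2 Q3 \<and> \<Lambda> = span3 Q1 Q2 Q3"

definition normalized_basis :: "mat6 \<Rightarrow> mat6 set \<Rightarrow> mat6 \<Rightarrow> mat6 \<Rightarrow> mat6 \<Rightarrow> bool" where
  "normalized_basis M \<Lambda> Q1 Q2 Q3 \<longleftrightarrow> is_basis3 \<Lambda> Q1 Q2 Q3 \<and>
     (\<exists>m1 m2 m3. is_in_lex (cob M Q1) m1 \<and> is_in_lex (cob M Q2) m2 \<and>
        is_in_lex (cob M Q3) m3 \<and> mono_succ m1 m2 \<and> mono_succ m2 m3)"

text \<open>Pluecker coordinate x_{m1} \<and> x_{m2} \<and> x_{m3} of span(Q1,Q2,Q3) (3x3 minor of the
coefficient matrix in the monomial basis of the coordinates x encoded by M).\<close>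
definition pluecker :: "mat6 \<Rightarrow> mat6 \<Rightarrow> mat6 \<Rightarrow> mat6 \<Rightarrow> nat \<times> nat \<Rightarrow> nat \<times> nat \<Rightarrow> nat \<times> nat \<Rightarrow> complex" where
  "pluecker M Q1 Q2 Q3 m1 m2 m3 =
     (let c1 = coef (cob M Q1); c2 = coef (cob M Q2); c3 = coef (cob M Q3) in
       c1 m1 * (c2 m2 * c3 m3 - c2 m3 * c3 m2)
     - c1 m2 * (c2 m1 * c3 m3 - c2 m3 * c3 m1)
     + c1 m3 * (c2 m1 * c3 m2 - c2 m2 * c3 m1))"

definition mono_weight :: "int list \<Rightarrow> nat \<times> nat \<Rightarrow> int" where
  "mono_weight a m = a ! fst m + a ! snd m"

text \<open>\<Lambda> is stable w.r.t. the 1-PS acting diagonally with weights a on the basis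
encoded by M.\<close>
definition stable_wrt :: "mat6 set \<Rightarrow> mat6 \<Rightarrow> int list \<Rightarrow> bool" where
  "stable_wrt \<Lambda> M a \<longleftrightarrow> (\<exists>Q1 Q2 Q3. is_basis3 \<Lambda> Q1 Q2 Q3 \<and>
     (\<exists>m1 m2 m3. is_mono m1 \<and> is_mono m2 \<and> is_mono m3 \<and>
        pluecker M Q1 Q2 Q3 m1 m2 m3 \<noteq> 0 \<and>
        mono_weight a m1 + mono_weight a m2 + mono_weight a m3 > 0))"

text \<open>Stable w.r.t. every 1-PS of numerical type a (diagonal in some basis of V).\<close>
definition stable_type :: "mat6 set \<Rightarrow> int list \<Rightarrow> bool" where
  "stable_type \<Lambda> a \<longleftrightarrow> (\<forall>M. invertible6 M \<longrightarrow> stable_wrt \<Lambda> M a)"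

definition qform :: "mat6 \<Rightarrow> (nat \<Rightarrow> complex) \<Rightarrow> complex" where
  "qform B y = (\<Sum>i<6. \<Sum>j<6. B i j * y i * y j)"

definition in_ideal :: "mat6 \<Rightarrow> nat \<Rightarrow> mat6 \<Rightarrow> bool" where
  "in_ideal M k A \<longleftrightarrow> (\<exists>c :: nat \<Rightarrow> nat \<Rightarrow> complex. \<forall>y.
      qform (cob M A) y = (\<Sum>m\<in>{k..<6}. y m * (\<Sum>l<6. c m l * y l)))"

definition in_ideal_sq :: "mat6 \<Rightarrow> nat \<Rightarrow> mat6 \<Rightarrow> bool" where
  "in_ideal_sq M k A \<longleftrightarrow> (\<exists>d :: nat \<Rightarrow> nat \<Rightarrow> complex. \<forall>y.
      qform (cob M A) y = (\<Sum>m\<in>{k..<6}. \<Sum>n\<in>{k..<6}. d m n * y m * y n))"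

end

theory Submission
  imports Defs "HOL-Library.Indicator_Function"
begin

text \<open>If \<Lambda> is spanned by Q1, Q2, Q3 and the largest \<rho>-weights of the monomials occurring
  in Q1, Q2, Q3 sum to at most 0, then every term of every 3x3 minor of the coefficient
  matrix has weight at most 0.\<close>

definition max_weight_le :: "mat6 \<Rightarrow> int list \<Rightarrow> mat6 \<Rightarrow> int \<Rightarrow> bool" where
  "max_weight_le M a Q b \<longleftrightarrow>
     (\<forall>m. is_mono m \<and> coef (cob M Q) m \<noteq> 0 \<longrightarrow> mono_weight a m \<le> b)"

lemma qform_indicator:
  assumes "S \<subseteq> {..<6}"
  shows "qform B (indicator S) = (\<Sum>i\<in>S. \<Sum>j\<in>S. B i j)"
proof -
  have "qform B (indicator S) = (\<Sum>i<6. \<Sum>j<6. if i \<in> S \<and> j \<in> S then B i j else 0)"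
    unfolding qform_def by (intro sum.cong refl) (auto simp: indicator_def)
  also have "\<dots> = (\<Sum>i<6. if i \<in> S then \<Sum>j<6. if j \<in> S then B i j else 0 else 0)"
    by (intro sum.cong) auto
  also have "\<dots> = (\<Sum>i\<in>S. \<Sum>j\<in>S. B i j)"
    using assms by (simp add: sum.If_cases Int_absorb1 Int_absorb2)
  finally show ?thesis .
qed

lemma qform_indicator_singleton: "a < 6 \<Longrightarrow> qform B (indicator {a}) = coef B (a, a)"
  by (simp add: qform_indicator coef_def)

lemma qform_indicator_doubleton:
  "\<lbrakk>a \<noteq> b; a < 6; b < 6\<rbrakk> \<Longrightarrow>
     qform B (indicator {a, b}) = coef B (a, a) + coef B (b, b) + coef B (a, b)"
  by (simp add: qform_indicator coef_def)

lemma coef_eq_0_if_in_ideal: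
  assumes "in_ideal M k A" "is_mono m" "snd m < k"
  shows "coef (cob M A) m = 0"
proof -
  obtain c where c: "\<And>y. qform (cob M A) y = (\<Sum>i\<in>{k..<6}. y i * (\<Sum>l<6. c i l * y l))"
    using assms(1) unfolding in_ideal_def by blast
  obtain i j where m: "m = (i, j)" "i \<le> j" "j < k" "j < 6"
    using assms(2,3) by (cases m) (auto simp: is_mono_def)
  have vanish: "qform (cob M A) (indicator S) = 0" if "S \<subseteq> {..<k}" for S
    unfolding c using that by (intro sum.neutral) (auto simp: indicator_def)
  show ?thesis
  proof (cases "i = j")
    case True
    then show ?thesis using vanish[of "{i}"] m by (simp add: qform_indicator_singleton)
  next
    case False
    then show ?thesis
      using vanish[of "{i}"] vanish[of "{j}"] vanish[of "{i, j}"] m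
      by (simp add: qform_indicator_singleton qform_indicator_doubleton)
  qed
qed

lemma coef_eq_0_if_in_ideal_sq:
  assumes "in_ideal_sq M k A" "is_mono m" "fst m < k"
  shows "coef (cob M A) m = 0"
proof -
  obtain d where d: "\<And>y. qform (cob M A) y = (\<Sum>i\<in>{k..<6}. \<Sum>l\<in>{k..<6}. d i l * y i * y l)"
    using assms(1) unfolding in_ideal_sq_def by blast
  obtain i j where m: "m = (i, j)" "i \<le> j" "i < k" "j < 6"
    using assms(2,3) by (cases m) (auto simp: is_mono_def)
  have insert_i: "qform (cob M A) (indicator (insert i S)) = qform (cob M A) (indicator S)" for S
    unfolding d using m by (intro sum.cong refl) (auto simp: indicator_def)
  have "coef (cob M A) (i, i) = 0"
    using insert_i[of "{}"] m by (simp add: qform_indicator coef_def)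
  moreover have "coef (cob M A) (i, j) = 0" if "i \<noteq> j"
    using insert_i[of "{j}"] \<open>coef (cob M A) (i, i) = 0\<close> m that
    by (simp add: qform_indicator_singleton qform_indicator_doubleton)
  ultimately show ?thesis using m by auto
qed

lemma coef_cob_lincomb3:
  "coef (cob M (lincomb3 a b c P1 P2 P3)) m
     = a * coef (cob M P1) m + b * coef (cob M P2) m + c * coef (cob M P3) m"
  by (simp add: coef_def cob_def lincomb3_def sum_distrib_left sum.distrib algebra_simps)

lemma pluecker_lincomb3:
  "pluecker M (lincomb3 a1 b1 c1 Q1 Q2 Q3) (lincomb3 a2 b2 c2 Q1 Q2 Q3)
      (lincomb3 a3 b3 c3 Q1 Q2 Q3) m1 m2 m3
   = (a1 * (b2 * c3 - b3 * c2) - b1 * (a2 * c3 - a3 * c2) + c1 * (a2 * b3 - a3 * b2))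
     * pluecker M Q1 Q2 Q3 m1 m2 m3"
  unfolding pluecker_def Let_def coef_cob_lincomb3 by (simp add: algebra_simps)

lemma pluecker_eq_0_if_span3:
  assumes "is_basis3 (span3 Q1 Q2 Q3) P1 P2 P3" "pluecker M Q1 Q2 Q3 m1 m2 m3 = 0"
  shows "pluecker M P1 P2 P3 m1 m2 m3 = 0"
proof -
  obtain a1 b1 c1 a2 b2 c2 a3 b3 c3 where
    "P1 = lincomb3 a1 b1 c1 Q1 Q2 Q3" "P2 = lincomb3 a2 b2 c2 Q1 Q2 Q3"
    "P3 = lincomb3 a3 b3 c3 Q1 Q2 Q3"
    using assms(1) unfolding is_basis3_def span3_def by blast
  then show ?thesis using assms(2) by (simp add: pluecker_lincomb3)
qed

lemma mono_weight_le_nth: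
  assumes "length a = 6" "sorted_wrt (\<ge>) a" "is_mono m" "i \<le> fst m" "j \<le> snd m"
  shows "mono_weight a m \<le> a ! i + a ! j"
proof -
  have nth_antitone: "a ! l \<le> a ! h" if "h \<le> l" "l < 6" for h l
    using sorted_wrt_nth_less[OF assms(2), of h l] assms(1) that
    by (cases "h = l") auto
  show ?thesis
    using assms(3-5) nth_antitone[of i "fst m"] nth_antitone[of j "snd m"]
    by (simp add: mono_weight_def is_mono_def)
qed

lemma max_weight_le_nth0:
  "\<lbrakk>length a = 6; sorted_wrt (\<ge>) a\<rbrakk> \<Longrightarrow> max_weight_le M a Q (a ! 0 + a ! 0)"
  unfolding max_weight_le_def using mono_weight_le_nth[of a _ 0 0] by simp

lemma max_weight_le_if_in_ideal:
  "\<lbrakk>in_ideal M k Q; length a = 6; sorted_wrt (\<ge>) a\<rbrakk> \<Longrightarrow> max_weight_le M a Q (a ! 0 + a ! k)"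
  unfolding max_weight_le_def
  by (metis coef_eq_0_if_in_ideal mono_weight_le_nth not_le zero_le)

lemma max_weight_le_if_in_ideal_sq:
  "\<lbrakk>in_ideal_sq M k Q; length a = 6; sorted_wrt (\<ge>) a\<rbrakk> \<Longrightarrow> max_weight_le M a Q (a ! k + a ! k)"
  unfolding max_weight_le_def
  by (metis coef_eq_0_if_in_ideal_sq mono_weight_le_nth is_mono_def not_le order.trans)

lemma coef_product_eq_0_if_max_weights:
  assumes "max_weight_le M a Q1 b1" "max_weight_le M a Q2 b2" "max_weight_le M a Q3 b3"
    and "b1 + b2 + b3 \<le> 0" "is_mono p" "is_mono q" "is_mono r"
    and "0 < mono_weight a p + mono_weight a q + mono_weight a r"
  shows "coef (cob M Q1) p * coef (cob M Q2) q * coef (cob M Q3) r = 0"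
  using assms unfolding max_weight_le_def by fastforce

lemma pluecker_eq_0_if_max_weights:
  assumes "max_weight_le M a Q1 b1" "max_weight_le M a Q2 b2" "max_weight_le M a Q3 b3"
    and "b1 + b2 + b3 \<le> 0" "is_mono m1" "is_mono m2" "is_mono m3"
    and "0 < mono_weight a m1 + mono_weight a m2 + mono_weight a m3"
  shows "pluecker M Q1 Q2 Q3 m1 m2 m3 = 0"
proof -
  note vanish = coef_product_eq_0_if_max_weights[OF assms(1-4)]
  have terms: "coef (cob M Q1) m1 * coef (cob M Q2) m2 * coef (cob M Q3) m3 = 0"
    "coef (cob M Q1) m1 * coef (cob M Q2) m3 * coef (cob M Q3) m2 = 0"
    "coef (cob M Q1) m2 * coef (cob M Q2) m1 * coef (cob M Q3) m3 = 0"
    "coef (cob M Q1) m2 * coef (cob M Q2) m3 * coef (cob M Q3) m1 = 0"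
    "coef (cob M Q1) m3 * coef (cob M Q2) m1 * coef (cob M Q3) m2 = 0"
    "coef (cob M Q1) m3 * coef (cob M Q2) m2 * coef (cob M Q3) m1 = 0"
    using assms(5-8) vanish[of m1 m2 m3] vanish[of m1 m3 m2] vanish[of m2 m1 m3]
      vanish[of m2 m3 m1] vanish[of m3 m1 m2] vanish[of m3 m2 m1]
    by (simp_all add: ac_simps)
  have "pluecker M Q1 Q2 Q3 m1 m2 m3
     = coef (cob M Q1) m1 * coef (cob M Q2) m2 * coef (cob M Q3) m3
     - coef (cob M Q1) m1 * coef (cob M Q2) m3 * coef (cob M Q3) m2
     - coef (cob M Q1) m2 * coef (cob M Q2) m1 * coef (cob M Q3) m3
     + coef (cob M Q1) m2 * coef (cob M Q2) m3 * coef (cob M Q3) m1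
     + coef (cob M Q1) m3 * coef (cob M Q2) m1 * coef (cob M Q3) m2
     - coef (cob M Q1) m3 * coef (cob M Q2) m2 * coef (cob M Q3) m1"
    unfolding pluecker_def Let_def by (simp add: algebra_simps)
  also have "\<dots> = 0" by (simp only: terms) simp
  finally show ?thesis .
qed

lemma stable_wrt_max_weights_pos:
  assumes "stable_wrt (span3 Q1 Q2 Q3) M a"
    and "max_weight_le M a Q1 b1" "max_weight_le M a Q2 b2" "max_weight_le M a Q3 b3"
  shows "0 < b1 + b2 + b3"
proof (rule ccontr)
  assume "\<not> 0 < b1 + b2 + b3"
  then have vanish: "pluecker M Q1 Q2 Q3 m1 m2 m3 = 0"
    if "is_mono m1" "is_mono m2" "is_mono m3"
      "0 < mono_weight a m1 + mono_weight a m2 + mono_weight a m3" for m1 m2 m3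
    using pluecker_eq_0_if_max_weights[OF assms(2-4)] that by simp
  from assms(1) show False
    unfolding stable_wrt_def by (blast dest: vanish pluecker_eq_0_if_span3)
qed

theorem lemma2p1:
  fixes \<Lambda> :: "mat6 set" and M Q1 Q2 Q3 :: mat6
  assumes net: "is_net \<Lambda>"
    and s1: "stable_type \<Lambda> [1, 1, 1, 1, 1, -5]"
    and s2: "stable_type \<Lambda> [1, 1, 1, 1, -2, -2]"
    and s3: "stable_type \<Lambda> [1, 1, 1, -1, -1, -1]"
    and s4: "stable_type \<Lambda> [2, 2, -1, -1, -1, -1]"
    and s5: "stable_type \<Lambda> [5, -1, -1, -1, -1, -1]"
    and M: "invertible6 M"
    and nb: "normalized_basis M \<Lambda> Q1 Q2 Q3"
  shows "(\<not> in_ideal M 5 Q1 \<and> \<not> in_ideal M 5 Q2 \<and> \<not> in_ideal M 5 Q3)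
    \<and> (\<not> (in_ideal M 4 Q2 \<and> in_ideal M 4 Q3) \<and> \<not> in_ideal_sq M 4 Q3)
    \<and> (\<not> (in_ideal M 3 Q1 \<and> in_ideal M 3 Q2 \<and> in_ideal M 3 Q3)
       \<and> (\<not> (in_ideal M 3 Q2 \<and> in_ideal M 3 Q3) \<or> \<not> in_ideal_sq M 3 Q3))
    \<and> (\<not> (in_ideal_sq M 2 Q2 \<and> in_ideal_sq M 2 Q3)
       \<and> (\<not> (in_ideal M 2 Q1 \<and> in_ideal M 2 Q2 \<and> in_ideal M 2 Q3) \<or> \<not> in_ideal_sq M 2 Q3))
    \<and> (\<not> (in_ideal M 1 Q1 \<and> in_ideal M 1 Q2 \<and> in_ideal M 1 Q3)
       \<or> \<not> (in_ideal_sq M 1 Q2 \<and> in_ideal_sq M 1 Q3))"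
proof -
  have span: "\<Lambda> = span3 Q1 Q2 Q3"
    using nb unfolding normalized_basis_def is_basis3_def by blast
  have pos: "0 < b1 + b2 + b3"
    if "stable_type \<Lambda> a" "max_weight_le M a Q1 b1" "max_weight_le M a Q2 b2"
      "max_weight_le M a Q3 b3" for a b1 b2 b3
    using stable_wrt_max_weights_pos that M span unfolding stable_type_def by blast
  note any = max_weight_le_nth0 and ideal = max_weight_le_if_in_ideal
    and ideal_sq = max_weight_le_if_in_ideal_sq
  have "\<not> in_ideal M 5 Q1" using pos[OF s1 ideal any any, of 5] by auto
  moreover have "\<not> in_ideal M 5 Q2" using pos[OF s1 any ideal any, of 5] by auto
  moreover have "\<not> in_ideal M 5 Q3" using pos[OF s1 any any ideal, of 5] by auto
  moreover have "\<not> (in_ideal M 4 Q2 \<and> in_ideal M 4 Q3)"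
    using pos[OF s2 any ideal ideal, of 4 4] by auto
  moreover have "\<not> in_ideal_sq M 4 Q3" using pos[OF s2 any any ideal_sq, of 4] by auto
  moreover have "\<not> (in_ideal M 3 Q1 \<and> in_ideal M 3 Q2 \<and> in_ideal M 3 Q3)"
    using pos[OF s3 ideal ideal ideal, of 3 3 3] by auto
  moreover have "\<not> (in_ideal M 3 Q2 \<and> in_ideal_sq M 3 Q3)"
    using pos[OF s3 any ideal ideal_sq, of 3 3] by auto
  moreover have "\<not> (in_ideal_sq M 2 Q2 \<and> in_ideal_sq M 2 Q3)"
    using pos[OF s4 any ideal_sq ideal_sq, of 2 2] by auto
  moreover have "\<not> (in_ideal M 2 Q1 \<and> in_ideal M 2 Q2 \<and> in_ideal_sq M 2 Q3)"
    using pos[OF s4 ideal ideal ideal_sq, of 2 2 2] by auto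
  moreover have "\<not> (in_ideal M 1 Q1 \<and> in_ideal_sq M 1 Q2 \<and> in_ideal_sq M 1 Q3)"
    using pos[OF s5 ideal ideal_sq ideal_sq, of 1 1 1] by auto
  ultimately show ?thesis by blast
qed

end
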